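(* Let $(W,\rho)$ be a rational $\mathfrak{sl}(2)$-module and let $C_\rho$ be its Casimir operator. Then the minimal polynomial $M_{C_\rho}(t)$ of $C_\rho$, regarded as a $\mathbb{C}(z)$-linear endomorphism of the finite-dimensional $\mathbb{C}(z)$-vector space $W$, has all its coefficients in $\mathbb{C}$, i.e. $M_{C_\rho}(t)\in\mathbb{C}[t]$. Consequently, $C_\rho$ regarded as a $\mathbb{C}$-linear endomorphism of $W$ has minimal polynomial $M_{C_\rho}(t)$.
   Context: $\mathfrak{sl}(2)$ is the complex Lie algebra with Chevalley basis $e,f,h$, $[e,f]=h$, $[h,e]=2e$, $[h,f]=-2f$; put $L_{-1}=f$, $L_0=-\tfrac12 h$, $L_1=-e$. Every $\mathfrak{sl}(2)$-module $(V,\rho)$ is a $\mathbb{C}[z]$-module via $z\cdot v=\rho(L_0)(v)$. The Casimir operator of $(V,\rho)$ is $C_\rho=\rho(L_0)(\rho(L_0)-1)-\rho(L_{-1})\rho(L_1)$. An $\mathfrak{sl}(2)$-module is called rational if, with this $\mathbb{C}[z]$-module structure, it is a finite-dimensional $\mathbb{C}(z)$-vector space (i.e. the $\mathbb{C}[z]$-action extends to a $\mathbb{C}(z)$-vector space structure of finite dimension). For a rational module, $C_\rho$ is $\mathbb{C}(z)$-linear. *)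

theory Defs
  imports "HOL-Computational_Algebra.Polynomial" "HOL-Computational_Algebra.Fraction_Field"
begin

type_synonym ratfun = "complex poly fract"

definition op_poly :: "('k::field \<Rightarrow> 'v::ab_group_add \<Rightarrow> 'v) \<Rightarrow> 'k poly \<Rightarrow> ('v \<Rightarrow> 'v) \<Rightarrow> 'v \<Rightarrow> 'v" where
  "op_poly sc p T v = (\<Sum>i\<le>degree p. sc (coeff p i) ((T ^^ i) v))"

definition is_min_poly :: "('k::field \<Rightarrow> 'v::ab_group_add \<Rightarrow> 'v) \<Rightarrow> ('v \<Rightarrow> 'v) \<Rightarrow> 'k poly \<Rightarrow> bool" where
  "is_min_poly sc T p \<longleftrightarrow>
     lead_coeff p = 1 \<and> (\<forall>v. op_poly sc p T v = 0) \<and>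
     (\<forall>q. q \<noteq> 0 \<and> (\<forall>v. op_poly sc q T v = 0) \<longrightarrow> degree p \<le> degree q)"

definition sl2_module :: "(complex \<Rightarrow> 'v::ab_group_add \<Rightarrow> 'v) \<Rightarrow> ('v \<Rightarrow> 'v) \<Rightarrow> ('v \<Rightarrow> 'v) \<Rightarrow> ('v \<Rightarrow> 'v) \<Rightarrow> bool" where
  "sl2_module sc re rf rh \<longleftrightarrow>
     vector_space sc \<and>
     Vector_Spaces.linear sc sc re \<and> Vector_Spaces.linear sc sc rf \<and> Vector_Spaces.linear sc sc rh \<and>
     (\<forall>v. re (rf v) - rf (re v) = rh v) \<and>
     (\<forall>v. rh (re v) - re (rh v) = sc 2 (re v)) \<and>
     (\<forall>v. rh (rf v) - rf (rh v) = - sc 2 (rf v))"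

definition Lm1 :: "(complex \<Rightarrow> 'v::ab_group_add \<Rightarrow> 'v) \<Rightarrow> ('v \<Rightarrow> 'v) \<Rightarrow> ('v \<Rightarrow> 'v) \<Rightarrow> ('v \<Rightarrow> 'v) \<Rightarrow> 'v \<Rightarrow> 'v" where
  "Lm1 sc re rf rh v = rf v"
definition L0 :: "(complex \<Rightarrow> 'v::ab_group_add \<Rightarrow> 'v) \<Rightarrow> ('v \<Rightarrow> 'v) \<Rightarrow> ('v \<Rightarrow> 'v) \<Rightarrow> ('v \<Rightarrow> 'v) \<Rightarrow> 'v \<Rightarrow> 'v" where
  "L0 sc re rf rh v = sc (- 1 / 2) (rh v)"
definition L1 :: "(complex \<Rightarrow> 'v::ab_group_add \<Rightarrow> 'v) \<Rightarrow> ('v \<Rightarrow> 'v) \<Rightarrow> ('v \<Rightarrow> 'v) \<Rightarrow> ('v \<Rightarrow> 'v) \<Rightarrow> 'v \<Rightarrow> 'v" where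
  "L1 sc re rf rh v = - re v"

definition casimir :: "(complex \<Rightarrow> 'v::ab_group_add \<Rightarrow> 'v) \<Rightarrow> ('v \<Rightarrow> 'v) \<Rightarrow> ('v \<Rightarrow> 'v) \<Rightarrow> ('v \<Rightarrow> 'v) \<Rightarrow> 'v \<Rightarrow> 'v" where
  "casimir sc re rf rh v =
     L0 sc re rf rh (L0 sc re rf rh v - v) - Lm1 sc re rf rh (L1 sc re rf rh v)"

text \<open>Rationality: fsc is a C(z)-vector space structure on V extending the C[z]-module
  structure given by z.v = L_0 v (i.e. the embedding of p in C(z) acts as p(L_0)),
  and V is finite-dimensional over C(z).\<close>
definition rational_ext :: "(complex \<Rightarrow> 'v::ab_group_add \<Rightarrow> 'v) \<Rightarrow> ('v \<Rightarrow> 'v) \<Rightarrow> ('v \<Rightarrow> 'v) \<Rightarrow> ('v \<Rightarrow> 'v)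
     \<Rightarrow> (ratfun \<Rightarrow> 'v \<Rightarrow> 'v) \<Rightarrow> bool" where
  "rational_ext sc re rf rh fsc \<longleftrightarrow>
     vector_space fsc \<and>
     (\<forall>p v. fsc (Fract p 1) v = op_poly sc p (L0 sc re rf rh) v) \<and>
     (\<exists>B. finite B \<and> module.span fsc B = UNIV)"

end

theory Submission
  imports Defs
begin

text \<open>Over \<open>K = \<complex>(z)\<close> the operators \<open>f\<close> and \<open>e\<close> commute with the Casimir operator \<open>C\<close>
  and are semilinear for the shifts \<open>\<sigma> : r(z) \<mapsto> r(z - 1)\<close> and \<open>\<sigma>\<inverse>\<close>, while
  \<open>fe = C - (z\<^sup>2 - z)\<close> and \<open>ef = C - (z\<^sup>2 + z)\<close>. Hence the minimal polynomial \<open>M\<close> of \<open>C\<close>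
  over \<open>K\<close> divides \<open>\<sigma>(M) (t - (z\<^sup>2 - z))\<close> and \<open>\<sigma>\<inverse>(M) (t - (z\<^sup>2 + z))\<close>; applying \<open>\<sigma>\<close> to
  the second, \<open>\<sigma>(M)\<close> divides \<open>M (t - (z\<^sup>2 - z))\<close>. Two monic polynomials of the same degree that
  divide each other after multiplication by the same linear factor are equal, so \<open>\<sigma>(M) = M\<close>:
  the coefficients of \<open>M\<close> are shift-invariant rational functions, i.e. constants. A complex
  polynomial annihilating \<open>C\<close> also annihilates it over \<open>K\<close>, so \<open>M\<close> stays minimal over \<open>\<complex>\<close>.\<close>

section \<open>Polynomials evaluated at linear operators\<close>

context vector_space
begin

interpretation self: vector_space_pair scale scale ..

lemma op_poly_eq_sum_lessThan:
  assumes "degree p < n"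
  shows "op_poly scale p T v = (\<Sum>i<n. coeff p i *s (T ^^ i) v)"
  unfolding op_poly_def
  by (rule sum.mono_neutral_right[symmetric]) (use assms in \<open>auto simp: coeff_eq_0\<close>)

lemma op_poly_0 [simp]: "op_poly scale 0 T v = 0"
  by (simp add: op_poly_def)

lemma op_poly_add: "op_poly scale (p + q) T v = op_poly scale p T v + op_poly scale q T v"
proof -
  define n where "n = Suc (degree p + degree q)"
  have "degree (p + q) < n" "degree p < n" "degree q < n"
    unfolding n_def using degree_add_le_max[of p q] by auto
  then show ?thesis
    by (simp add: op_poly_eq_sum_lessThan scale_left_distrib sum.distrib)
qed

lemma op_poly_diff: "op_poly scale (p - q) T v = op_poly scale p T v - op_poly scale q T v"
  using op_poly_add[of "p - q" q T v] by simp

lemma op_poly_sum: "op_poly scale (\<Sum>i\<in>A. f i) T v = (\<Sum>i\<in>A. op_poly scale (f i) T v)"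
  by (induct A rule: infinite_finite_induct) (simp_all add: op_poly_add)

lemma op_poly_smult: "op_poly scale (smult c p) T v = c *s op_poly scale p T v"
proof -
  have "degree (smult c p) < Suc (degree p)"
    using degree_smult_le[of c p] by simp
  then show ?thesis
    by (simp add: op_poly_eq_sum_lessThan[of _ "Suc (degree p)"] scale_sum_right
        del: sum.lessThan_Suc)
qed

lemma op_poly_monom: "op_poly scale (monom c k) T v = c *s (T ^^ k) v"
proof -
  have "degree (monom c k) < Suc k"
    by (simp add: degree_monom_le le_imp_less_Suc)
  then have "op_poly scale (monom c k) T v = (\<Sum>i<Suc k. coeff (monom c k) i *s (T ^^ i) v)"
    by (rule op_poly_eq_sum_lessThan)
  also have "\<dots> = c *s (T ^^ k) v"
    by (simp add: coeff_monom if_distrib[of "\<lambda>a. a *s x" for x] cong: if_cong)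
  finally show ?thesis .
qed

lemma op_poly_pCons:
  assumes T: "Vector_Spaces.linear scale scale T"
  shows "op_poly scale (pCons a p) T v = a *s v + T (op_poly scale p T v)"
proof -
  define m where "m = Suc (degree p)"
  have "degree (pCons a p) < Suc m" "degree p < m"
    unfolding m_def using degree_pCons_le[of a p] by simp_all
  then show ?thesis
    by (simp add: op_poly_eq_sum_lessThan sum.lessThan_Suc_shift self.linear_sum[OF T]
        self.linear_scale[OF T] del: sum.lessThan_Suc)
qed

lemma op_poly_const:
  "Vector_Spaces.linear scale scale T \<Longrightarrow> op_poly scale [:a:] T v = a *s v"
  by (simp add: op_poly_pCons self.linear_0)

lemma op_poly_linear_poly:
  "Vector_Spaces.linear scale scale T \<Longrightarrow> op_poly scale [:a, b:] T v = a *s v + b *s T v"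
  by (simp add: op_poly_pCons self.linear_0 self.linear_scale)

lemma linear_op_poly:
  assumes T: "Vector_Spaces.linear scale scale T"
  shows "Vector_Spaces.linear scale scale (op_poly scale p T)"
proof (induction p)
  case 0
  show ?case
    by (simp add: Vector_Spaces.linear_iff vector_space_axioms)
next
  case (pCons a p)
  then show ?case
    by (simp add: Vector_Spaces.linear_iff vector_space_axioms op_poly_pCons[OF T]
        self.linear_add[OF T] self.linear_add[OF pCons.IH] self.linear_scale[OF T]
        self.linear_scale[OF pCons.IH] scale_right_distrib scale_left_commute algebra_simps)
qed

lemma op_poly_mult:
  assumes T: "Vector_Spaces.linear scale scale T"
  shows "op_poly scale (p * q) T v = op_poly scale p T (op_poly scale q T v)"
proof (induction p arbitrary: v)
  case 0
  show ?case by simp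
next
  case (pCons a p)
  have "pCons a p * q = smult a q + pCons 0 (p * q)"
    by simp
  then show ?case
    by (simp only: op_poly_add op_poly_smult op_poly_pCons[OF T] pCons.IH) simp
qed

lemma op_poly_commute_semilinear:
  assumes T: "Vector_Spaces.linear scale scale T" and T': "Vector_Spaces.linear scale scale T'"
    and X_add: "\<And>x y. X (x + y) = X x + X y"
    and X_scale: "\<And>c x. X (c *s x) = \<phi> c *s X x" and "\<phi> 0 = 0"
    and X_T: "\<And>x. X (T x) = T' (X x)"
  shows "X (op_poly scale p T v) = op_poly scale (map_poly \<phi> p) T' (X v)"
proof (induction p arbitrary: v)
  case 0
  have "X 0 = 0"
    using X_add[of 0 0] by simp
  then show ?case by simp
next
  case (pCons a p)
  show ?case
    by (simp add: map_poly_pCons[of \<phi>, OF \<open>\<phi> 0 = 0\<close>] op_poly_pCons[OF T] op_poly_pCons[OF T']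
        X_add X_scale X_T pCons.IH)
qed

lemma op_poly_pcompose:
  assumes T: "Vector_Spaces.linear scale scale T"
  shows "op_poly scale (pcompose p q) T v = op_poly scale p (op_poly scale q T) v"
proof (induction p arbitrary: v)
  case 0
  show ?case by simp
next
  case (pCons a p)
  show ?case
    by (simp add: pcompose_pCons op_poly_add op_poly_const[OF T] op_poly_mult[OF T]
        op_poly_pCons[OF linear_op_poly[OF T]] pCons.IH)
qed

lemma span_image_lessThan_sum:
  fixes k :: nat
  shows "x \<in> span (f ` {..<k}) \<Longrightarrow> \<exists>c. x = (\<Sum>i<k. c i *s f i)"
proof (induction k arbitrary: x)
  case 0
  then show ?case by simp
next
  case (Suc k)
  then obtain a where "x - a *s f k \<in> span (f ` {..<k})"
    by (auto simp: lessThan_Suc span_breakdown_eq)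
  then obtain c where "x - a *s f k = (\<Sum>i<k. c i *s f i)"
    using Suc.IH by blast
  then have "x = (\<Sum>i<Suc k. (c(k := a)) i *s f i)"
    by (simp add: algebra_simps)
  then show ?case by blast
qed

lemma ex_annihilating_poly_vector:
  assumes B: "finite B" "span B = UNIV" and T: "Vector_Spaces.linear scale scale T"
  shows "\<exists>p. p \<noteq> 0 \<and> op_poly scale p T b = 0"
proof (rule ccontr)
  \<comment> \<open>Otherwise the vectors \<open>T\<^sup>i b\<close> are linearly independent, too many to lie in \<open>span B\<close>.\<close>
  assume no_annihilator: "\<not> ?thesis"
  define g where "g i = (T ^^ i) b" for i
  have new: "g k \<notin> span (g ` {..<k})" for k
  proof
    assume "g k \<in> span (g ` {..<k})"
    then obtain c where c: "g k = (\<Sum>i<k. c i *s g i)"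
      using span_image_lessThan_sum by blast
    define p where "p = monom 1 k - (\<Sum>i<k. monom (c i) i)"
    have "coeff p k = 1"
      by (simp add: p_def coeff_sum)
    moreover have "op_poly scale p T b = 0"
      using c by (simp add: p_def op_poly_diff op_poly_sum op_poly_monom g_def)
    moreover have "p \<noteq> 0"
      using \<open>coeff p k = 1\<close> by auto
    ultimately show False
      using no_annihilator by blast
  qed
  have indep: "independent (g ` {..<k}) \<and> card (g ` {..<k}) = k" for k
  proof (induction k)
    case 0
    then show ?case by (simp add: independent_empty)
  next
    case (Suc k)
    have "g k \<notin> g ` {..<k}"
      using new[of k] span_base[of "g k" "g ` {..<k}"] by blast
    then show ?case
      using Suc.IH new[of k] independent_insertI
      by (simp add: lessThan_Suc card_insert_disjoint)
  qed
  have "g ` {..<Suc (card B)} \<subseteq> span B"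
    using B by simp
  then have "card (g ` {..<Suc (card B)}) \<le> card B"
    using independent_span_bound[OF B(1)] indep by blast
  then show False
    using indep[of "Suc (card B)"] by simp
qed

lemma ex_annihilating_poly:
  assumes B: "finite B" "span B = UNIV" and T: "Vector_Spaces.linear scale scale T"
  shows "\<exists>P. P \<noteq> 0 \<and> (\<forall>v. op_poly scale P T v = 0)"
proof -
  obtain p where p: "\<And>b. p b \<noteq> 0 \<and> op_poly scale (p b) T b = 0"
    using ex_annihilating_poly_vector[OF B T] by metis
  define P where "P = (\<Prod>b\<in>B. p b)"
  have P_linear: "Vector_Spaces.linear scale scale (op_poly scale P T)"
    by (rule linear_op_poly[OF T])
  have "P \<noteq> 0"
    unfolding P_def using B(1) p by simp
  moreover have "op_poly scale P T b = 0" if "b \<in> B" for b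
  proof -
    have "P = (\<Prod>x\<in>B - {b}. p x) * p b"
      unfolding P_def using prod.remove[OF B(1) that, of p] by (simp add: mult.commute)
    then show ?thesis
      using p[of b] by (simp add: op_poly_mult[OF T] self.linear_0[OF linear_op_poly[OF T]])
  qed
  then have "op_poly scale P T v = 0" for v
    using self.linear_eq_0_on_span[OF P_linear, of B v] B(2) by blast
  ultimately show ?thesis by blast
qed

lemma ex_is_min_poly:
  assumes "finite B" "span B = UNIV" and "Vector_Spaces.linear scale scale T"
  shows "\<exists>M. is_min_poly scale T M"
proof -
  define annihilates where "annihilates q \<longleftrightarrow> q \<noteq> 0 \<and> (\<forall>v. op_poly scale q T v = 0)" for q
  obtain P where "annihilates P"
    using ex_annihilating_poly[OF assms] unfolding annihilates_def by blast
  then obtain q where q: "annihilates q" and q_least: "\<And>r. annihilates r \<Longrightarrow> degree q \<le> degree r"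
    using ex_has_least_nat[where P = annihilates and m = degree] by blast
  define M where "M = smult (inverse (lead_coeff q)) q"
  have "lead_coeff M = 1" "\<forall>v. op_poly scale M T v = 0" "degree M = degree q"
    using q by (simp_all add: M_def annihilates_def op_poly_smult)
  then have "is_min_poly scale T M"
    unfolding is_min_poly_def using q_least[unfolded annihilates_def] by simp
  then show ?thesis ..
qed

lemma is_min_poly_dvd:
  assumes M: "is_min_poly scale T M" and T: "Vector_Spaces.linear scale scale T"
    and P: "\<And>v. op_poly scale P T v = 0"
  shows "M dvd P"
proof -
  have "M \<noteq> 0" and M_kills: "\<And>v. op_poly scale M T v = 0"
    using M unfolding is_min_poly_def by auto
  have "op_poly scale (P mod M) T v = 0" for v
  proof -
    have "op_poly scale P T v = op_poly scale (P div M * M) T v + op_poly scale (P mod M) T v"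
      by (simp flip: op_poly_add)
    then show ?thesis
      using P[of v] M_kills by (simp add: op_poly_mult[OF T] self.linear_0[OF linear_op_poly[OF T]])
  qed
  moreover have "degree (P mod M) < degree M" if "P mod M \<noteq> 0"
    using degree_mod_less[OF \<open>M \<noteq> 0\<close>, of P] that by simp
  ultimately have "P mod M = 0"
    using M unfolding is_min_poly_def by (meson leD)
  then show ?thesis
    by (simp add: dvd_eq_mod_eq_0)
qed

end

lemma is_min_poly_map_poly_descend:
  fixes emb :: "'k::field \<Rightarrow> 'K::field"
  assumes "inj emb" "emb 0 = 0" "emb 1 = 1"
    and op_poly_map: "\<And>q v. op_poly fscale (map_poly emb q) T v = op_poly scale q T v"
    and M: "is_min_poly fscale T (map_poly emb m)"
  shows "is_min_poly scale T m"
proof -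
  have degree_map: "degree (map_poly emb q) = degree q" for q
    using assms(1,2) by (intro degree_map_poly) (metis injD)
  have "emb x = 0 \<longleftrightarrow> x = 0" for x
    using assms(1,2) by (metis injD)
  then have map_eq_0: "map_poly emb q = 0 \<longleftrightarrow> q = 0" for q
    by (simp add: poly_eq_iff coeff_map_poly assms(2))
  have "emb (lead_coeff m) = 1"
    using M degree_map by (simp add: is_min_poly_def coeff_map_poly assms(2))
  then have "lead_coeff m = 1"
    using assms(1,3) by (metis injD)
  moreover have "\<forall>v. op_poly scale m T v = 0"
    using M by (simp add: is_min_poly_def op_poly_map)
  moreover have "degree m \<le> degree q" if "q \<noteq> 0" "\<forall>v. op_poly scale q T v = 0" for q
  proof -
    have "map_poly emb q \<noteq> 0" "\<forall>v. op_poly fscale (map_poly emb q) T v = 0"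
      using that by (simp_all add: map_eq_0 op_poly_map)
    then have "degree (map_poly emb m) \<le> degree (map_poly emb q)"
      using M unfolding is_min_poly_def by blast
    then show ?thesis
      by (simp add: degree_map)
  qed
  ultimately show ?thesis
    unfolding is_min_poly_def by blast
qed

section \<open>Coefficient maps and monic polynomials\<close>

lemma ex_map_poly_eq:
  fixes f :: "'a::zero \<Rightarrow> 'b::zero"
  assumes "inj f" "f 0 = 0" "\<And>i. coeff p i \<in> range f"
  shows "\<exists>q. p = map_poly f q"
proof
  have "inv f 0 = 0"
    using assms(1,2) by (metis inv_f_f)
  then show "p = map_poly f (map_poly (inv f) p)"
    using assms(2,3) by (intro poly_eqI) (simp add: coeff_map_poly f_inv_into_f)
qed

lemma map_poly_mult_hom:
  fixes f :: "'a::comm_ring_1 \<Rightarrow> 'b::comm_ring_1"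
  assumes f0: "f 0 = 0" and f_add: "\<And>x y. f (x + y) = f x + f y"
    and f_mult: "\<And>x y. f (x * y) = f x * f y"
  shows "map_poly f (p * q) = map_poly f p * map_poly f q"
proof (induction p)
  case 0
  show ?case by simp
next
  case (pCons a p)
  have map_add: "map_poly f (r + s) = map_poly f r + map_poly f s" for r s
    by (intro poly_eqI) (simp add: coeff_map_poly f0 f_add)
  show ?case
    by (simp add: map_add map_poly_smult[OF f0 f_mult] map_poly_pCons[of f, OF f0] pCons.IH f0)
qed

lemma map_poly_dvd_hom:
  fixes f :: "'a::comm_ring_1 \<Rightarrow> 'b::comm_ring_1"
  assumes "f 0 = 0" "\<And>x y. f (x + y) = f x + f y" "\<And>x y. f (x * y) = f x * f y"
    and "p dvd q"
  shows "map_poly f p dvd map_poly f q"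
  using assms(4) by (elim dvdE) (simp add: map_poly_mult_hom[OF assms(1-3)])

lemma monic_mult_linear_eq_if_dvd:
  fixes M N :: "'a::field poly"
  assumes "lead_coeff M = 1" "lead_coeff N = 1" "degree N = degree M"
    and "M dvd N * [:- a, 1:]"
  shows "\<exists>\<alpha>. N * [:- a, 1:] = M * [:- \<alpha>, 1:]"
proof -
  obtain q where q: "N * [:- a, 1:] = M * q"
    using assms(4) by (elim dvdE)
  have "M \<noteq> 0" "N \<noteq> 0"
    using assms(1,2) by auto
  then have "q \<noteq> 0"
    using q by (metis mult_eq_0_iff pCons_eq_0_iff one_neq_zero)
  have "degree (N * [:- a, 1:]) = degree M + 1"
    using \<open>N \<noteq> 0\<close> assms(3) by (subst degree_mult_eq) simp_all
  then have "degree q = 1"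
    using q \<open>M \<noteq> 0\<close> \<open>q \<noteq> 0\<close> by (simp add: degree_mult_eq)
  moreover have "lead_coeff (N * [:- a, 1:]) = 1"
    using assms(2) by (subst lead_coeff_mult) simp
  then have "lead_coeff (M * q) = 1"
    by (simp only: q)
  then have "lead_coeff q = 1"
    using assms(1) by (simp add: lead_coeff_mult)
  ultimately have "q = [:- (- coeff q 0), 1:]"
    by (intro poly_eqI) (auto simp: coeff_pCons coeff_eq_0 split: nat.splits)
  then show ?thesis
    using q by (intro exI[of _ "- coeff q 0"]) (simp only:)
qed

lemma monic_eq_if_dvd_mult_linear:
  fixes M N :: "'a::field poly"
  assumes "lead_coeff M = 1" "lead_coeff N = 1" "degree N = degree M"
    and "M dvd N * [:- a, 1:]" and "N dvd M * [:- a, 1:]"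
  shows "N = M"
proof -
  obtain \<alpha> where \<alpha>: "N * [:- a, 1:] = M * [:- \<alpha>, 1:]"
    using monic_mult_linear_eq_if_dvd[OF assms(1-4)] by blast
  obtain \<beta> where \<beta>: "M * [:- a, 1:] = N * [:- \<beta>, 1:]"
    using monic_mult_linear_eq_if_dvd[OF assms(2,1) assms(3)[symmetric] assms(5)] by blast
  have "N * ([:- a, 1:] * [:- a, 1:]) = N * [:- a, 1:] * [:- a, 1:]"
    by (rule mult.assoc[symmetric])
  also have "\<dots> = M * [:- a, 1:] * [:- \<alpha>, 1:]"
    unfolding \<alpha> by (simp only: mult_ac)
  also have "\<dots> = N * ([:- \<beta>, 1:] * [:- \<alpha>, 1:])"
    unfolding \<beta> by (rule mult.assoc)
  finally have "[:- a, 1:] * [:- a, 1:] = [:- \<beta>, 1:] * [:- \<alpha>, 1:]"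
    using mult_left_cancel[of N] assms(2) by (metis leading_coeff_0_iff zero_neq_one)
  from arg_cong[OF this, of "\<lambda>p. poly p \<alpha>"] have "(\<alpha> - a) * (\<alpha> - a) = 0"
    by (simp add: algebra_simps)
  then have "\<alpha> = a"
    by simp
  have "[:- a, 1:] \<noteq> 0"
    by simp
  moreover have "N * [:- a, 1:] = M * [:- a, 1:]"
    using \<alpha> \<open>\<alpha> = a\<close> by (simp only:)
  ultimately show ?thesis
    by (rule mult_right_cancel[THEN iffD1])
qed

section \<open>Shifting rational functions\<close>

lift_definition fract_shift :: "'a::idom \<Rightarrow> 'a poly fract \<Rightarrow> 'a poly fract"
  is "\<lambda>c (p, q). (pcompose p [:c, 1:], pcompose q [:c, 1:])"
  by (auto simp: pcompose_eq_0_iff simp flip: pcompose_mult)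

lemma fract_shift_Fract:
  "q \<noteq> 0 \<Longrightarrow> fract_shift c (Fract p q) = Fract (pcompose p [:c, 1:]) (pcompose q [:c, 1:])"
  by (simp add: Fract.abs_eq fract_shift.abs_eq pcompose_eq_0_iff)

lemma fract_shift_add: "fract_shift c (r + s) = fract_shift c r + fract_shift c s"
  by (cases r, cases s) (simp add: fract_shift_Fract pcompose_add pcompose_mult pcompose_eq_0_iff)

lemma fract_shift_mult: "fract_shift c (r * s) = fract_shift c r * fract_shift c s"
  by (cases r, cases s) (simp add: fract_shift_Fract pcompose_mult pcompose_eq_0_iff)

lemma fract_shift_const [simp]: "fract_shift c (Fract [:a:] 1) = Fract [:a:] 1"
  by (simp add: fract_shift_Fract pcompose_1)

lemma fract_shift_0 [simp]: "fract_shift c 0 = 0"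
  using fract_shift_const[of c 0] by (simp add: fract_collapse)

lemma fract_shift_1 [simp]: "fract_shift c 1 = 1"
  by (simp add: One_fract_def fract_shift_Fract pcompose_1)

lemma fract_shift_minus [simp]: "fract_shift c (- r) = - fract_shift c r"
  using fract_shift_add[of c r "- r"] by (simp add: add_eq_0_iff)

lemma fract_shift_shift: "fract_shift c (fract_shift d r) = fract_shift (d + c) r"
proof (cases r)
  case (Fract p q)
  have "pcompose [:d, 1:] [:c, 1:] = [:d + c, 1:]"
    by (simp add: pcompose_pCons)
  then show ?thesis
    using Fract by (simp add: fract_shift_Fract pcompose_eq_0_iff flip: pcompose_assoc)
qed

lemma fract_shift_by_0 [simp]: "fract_shift 0 r = r"
  by (cases r) (simp add: fract_shift_Fract)

lemma fract_shift_inverse [simp]: "fract_shift (- c) (fract_shift c r) = r"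
  by (simp add: fract_shift_shift)

lemma fract_shift_eq_0_iff [simp]: "fract_shift c r = 0 \<longleftrightarrow> r = 0"
proof
  assume "fract_shift c r = 0"
  then have "fract_shift (- c) (fract_shift c r) = 0"
    by simp
  then show "r = 0"
    by simp
qed simp

lemma fract_shift_invariant_imp_const:
  fixes r :: "complex poly fract"
  assumes "c \<noteq> 0" and "fract_shift c r = r"
  shows "\<exists>a. r = Fract [:a:] 1"
proof (cases r)
  \<comment> \<open>\<open>p/q\<close> is constant along a line \<open>c (\<i> y + \<nat>)\<close> that avoids the roots of \<open>q\<close>.\<close>
  case (Fract p q)
  then have pcompose_eq: "pcompose p [:c, 1:] * q = p * pcompose q [:c, 1:]"
    using assms(2) by (simp add: fract_shift_Fract eq_fract pcompose_eq_0_iff)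
  have shift_eq: "poly p (c + z) * poly q z = poly p z * poly q (c + z)" for z
    using arg_cong[OF pcompose_eq, of "\<lambda>f. poly f z"] by (simp add: poly_pcompose)
  have "finite ((\<lambda>x. Im (x / c)) ` {x. poly q x = 0})"
    using poly_roots_finite[OF \<open>q \<noteq> 0\<close>] by simp
  then obtain y where y: "y \<notin> (\<lambda>x. Im (x / c)) ` {x. poly q x = 0}"
    using ex_new_if_finite[OF infinite_UNIV_char_0] by blast
  define w where "w n = c * (Complex 0 y + of_nat n)" for n :: nat
  have q_w: "poly q (w n) \<noteq> 0" for n
    using y assms(1) by (force simp: w_def)
  define a where "a = poly p (w 0) / poly q (w 0)"
  have p_w: "poly p (w n) = a * poly q (w n)" for n
  proof (induction n)
    case 0
    show ?case using q_w[of 0] by (simp add: a_def)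
  next
    case (Suc n)
    have "w (Suc n) = c + w n"
      by (simp add: w_def algebra_simps)
    then have "poly p (w (Suc n)) * poly q (w n) = a * poly q (w (Suc n)) * poly q (w n)"
      using shift_eq[of "w n"] Suc.IH by (simp add: mult_ac)
    then show ?case
      using q_w[of n] by simp
  qed
  have "inj w"
    using assms(1) by (auto simp: inj_def w_def)
  then have "infinite (range w)"
    by (rule range_inj_infinite)
  moreover have "range w \<subseteq> {x. poly (p - smult a q) x = 0}"
    using p_w by auto
  ultimately have "p - smult a q = 0"
    using poly_roots_finite finite_subset by blast
  then have "p = smult a q"
    by simp
  then show ?thesis
    using Fract by (auto simp: eq_fract)
qed

lemma inj_Fract_const: "inj (\<lambda>c::'a::idom. Fract [:c:] 1)"
  by (simp add: inj_def eq_fract)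

lemma Fract_const_0: "Fract [:0:] 1 = 0"
  by (simp add: fract_collapse)

lemma Fract_const_1: "Fract [:1:] 1 = 1"
  by (simp only: One_fract_def one_pCons)

section \<open>Rational sl(2)-modules\<close>

locale rational_sl2_module =
  fixes sc :: "complex \<Rightarrow> 'v::ab_group_add \<Rightarrow> 'v" and re rf rh :: "'v \<Rightarrow> 'v"
    and fsc :: "ratfun \<Rightarrow> 'v \<Rightarrow> 'v"
  assumes sl2_module: "sl2_module sc re rf rh"
    and rational: "rational_ext sc re rf rh fsc"
begin

sublocale V: vector_space sc
  using sl2_module by (simp add: sl2_module_def)

sublocale F: vector_space fsc
  using rational by (simp add: rational_ext_def)

interpretation V: vector_space_pair sc sc ..
interpretation F: vector_space_pair fsc fsc ..

abbreviation L :: "'v \<Rightarrow> 'v" where "L \<equiv> L0 sc re rf rh"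
abbreviation Cas :: "'v \<Rightarrow> 'v" where "Cas \<equiv> casimir sc re rf rh"

lemma linear_re: "Vector_Spaces.linear sc sc re"
  and linear_rf: "Vector_Spaces.linear sc sc rf"
  and linear_rh: "Vector_Spaces.linear sc sc rh"
  using sl2_module by (simp_all add: sl2_module_def)

lemma linear_L: "Vector_Spaces.linear sc sc L"
  by (simp add: Vector_Spaces.linear_iff V.vector_space_axioms L0_def V.linear_add[OF linear_rh]
      V.linear_scale[OF linear_rh] V.scale_right_distrib V.scale_left_commute)

lemma scale_2: "sc 2 x = x + x"
  using V.scale_left_distrib[of 1 1 x] by simp

lemma double_cancel:
  fixes x y :: 'v
  shows "x + x = y + y \<Longrightarrow> x = y"
  using V.scale_cancel_left[of 2 x y] by (simp add: scale_2)

lemma rh_eq: "rh v = - (L v + L v)"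
proof -
  have "L v + L v = sc (- 1 / 2 + - 1 / 2) (rh v)"
    by (simp only: L0_def V.scale_left_distrib)
  then show ?thesis
    by simp
qed

lemmas linear_simps =
  V.linear_add[OF linear_re] V.linear_diff[OF linear_re] V.linear_neg[OF linear_re]
  V.linear_0[OF linear_re]
  V.linear_add[OF linear_rf] V.linear_diff[OF linear_rf] V.linear_neg[OF linear_rf]
  V.linear_0[OF linear_rf]
  V.linear_add[OF linear_L] V.linear_diff[OF linear_L] V.linear_neg[OF linear_L]
  V.linear_0[OF linear_L]

lemma L_rf: "L (rf v) = rf (L v) + rf v"
proof (rule double_cancel)
  have "rh (rf v) = rf (rh v) - (rf v + rf v)"
    using sl2_module by (simp add: sl2_module_def scale_2 algebra_simps)
  then show "L (rf v) + L (rf v) = (rf (L v) + rf v) + (rf (L v) + rf v)"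
    by (simp add: rh_eq linear_simps algebra_simps)
qed

lemma L_re: "L (re v) = re (L v) - re v"
proof (rule double_cancel)
  have "rh (re v) = re (rh v) + (re v + re v)"
    using sl2_module by (simp add: sl2_module_def scale_2 algebra_simps)
  then show "L (re v) + L (re v) = (re (L v) - re v) + (re (L v) - re v)"
    by (simp add: rh_eq linear_simps algebra_simps)
qed

lemma re_rf: "re (rf v) = rf (re v) - (L v + L v)"
proof -
  have "re (rf v) - rf (re v) = rh v"
    using sl2_module by (simp add: sl2_module_def)
  then show ?thesis
    by (simp add: rh_eq algebra_simps)
qed

lemma casimir_eq: "Cas v = L (L v) - L v + rf (re v)"
  by (simp add: casimir_def L1_def Lm1_def V.linear_diff[OF linear_L] V.linear_neg[OF linear_rf])

lemma Cas_L: "Cas (L v) = L (Cas v)"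
  by (simp add: casimir_eq linear_simps L_rf L_re algebra_simps)

lemma Cas_rf: "Cas (rf v) = rf (Cas v)"
  by (simp add: casimir_eq linear_simps L_rf re_rf algebra_simps)

lemma Cas_re: "Cas (re v) = re (Cas v)"
  by (simp add: casimir_eq linear_simps L_re re_rf algebra_simps)

lemma linear_Cas: "Vector_Spaces.linear sc sc Cas"
  by (simp add: Vector_Spaces.linear_iff V.vector_space_axioms casimir_eq linear_simps
      V.linear_scale[OF linear_L] V.linear_scale[OF linear_re] V.linear_scale[OF linear_rf]
      V.scale_right_distrib V.scale_right_diff_distrib algebra_simps)

lemma fsc_poly: "fsc (Fract p 1) v = op_poly sc p L v"
  using rational by (simp add: rational_ext_def)

lemma Cas_op_poly_L: "Cas (op_poly sc p L v) = op_poly sc p L (Cas v)"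
  using V.op_poly_commute_semilinear[OF linear_L linear_L, where X = Cas and \<phi> = "\<lambda>c. c"]
  by (simp add: V.linear_add[OF linear_Cas] V.linear_scale[OF linear_Cas] Cas_L)

lemma rf_op_poly_L: "rf (op_poly sc p L v) = op_poly sc (pcompose p [:- 1, 1:]) L (rf v)"
proof -
  have "rf (L x) = op_poly sc [:- 1, 1:] L (rf x)" for x
    by (simp add: V.op_poly_linear_poly[OF linear_L] L_rf)
  then have "rf (op_poly sc p L v) = op_poly sc p (op_poly sc [:- 1, 1:] L) (rf v)"
    using V.op_poly_commute_semilinear[OF linear_L V.linear_op_poly[OF linear_L],
        where X = rf and \<phi> = "\<lambda>c. c"]
    by (simp add: V.linear_add[OF linear_rf] V.linear_scale[OF linear_rf])
  then show ?thesis
    by (simp add: V.op_poly_pcompose[OF linear_L])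
qed

lemma re_op_poly_L: "re (op_poly sc p L v) = op_poly sc (pcompose p [:1, 1:]) L (re v)"
proof -
  have "re (L x) = op_poly sc [:1, 1:] L (re x)" for x
    by (simp add: V.op_poly_linear_poly[OF linear_L] L_re)
  then have "re (op_poly sc p L v) = op_poly sc p (op_poly sc [:1, 1:] L) (re v)"
    using V.op_poly_commute_semilinear[OF linear_L V.linear_op_poly[OF linear_L],
        where X = re and \<phi> = "\<lambda>c. c"]
    by (simp add: V.linear_add[OF linear_re] V.linear_scale[OF linear_re])
  then show ?thesis
    by (simp add: V.op_poly_pcompose[OF linear_L])
qed

lemma fsc_Fract_semilinear:
  assumes X_add: "\<And>x y. X (x + y) = X x + X y"
    and X_op_poly: "\<And>p v. X (op_poly sc p L v) = op_poly sc (\<pi> p) L (X v)"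
    and "\<pi> q \<noteq> 0" "q \<noteq> 0"
  shows "X (fsc (Fract p q) v) = fsc (Fract (\<pi> p) (\<pi> q)) (X v)"
proof -
  define w where "w = fsc (Fract p q) v"
  have "fsc (Fract q 1) w = fsc (Fract p 1) v"
    using \<open>q \<noteq> 0\<close> by (simp add: w_def eq_fract)
  then have "fsc (Fract (\<pi> q) 1) (X w) = fsc (Fract (\<pi> p) 1) (X v)"
    by (simp add: fsc_poly flip: X_op_poly)
  then have "fsc (Fract 1 (\<pi> q)) (fsc (Fract (\<pi> q) 1) (X w)) = fsc (Fract (\<pi> p) (\<pi> q)) (X v)"
    by simp
  moreover have "Fract 1 (\<pi> q) * Fract (\<pi> q) 1 = 1"
    using \<open>\<pi> q \<noteq> 0\<close> by (simp add: eq_fract One_fract_def)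
  ultimately show ?thesis
    by (simp add: w_def)
qed

lemma Cas_fsc: "Cas (fsc r v) = fsc r (Cas v)"
proof (cases r)
  case (Fract p q)
  then show ?thesis
    using fsc_Fract_semilinear[of Cas "\<lambda>p. p" q p v]
    by (simp add: V.linear_add[OF linear_Cas] Cas_op_poly_L)
qed

lemma rf_fsc: "rf (fsc r v) = fsc (fract_shift (- 1) r) (rf v)"
proof (cases r)
  case (Fract p q)
  then show ?thesis
    using fsc_Fract_semilinear[of rf "\<lambda>p. pcompose p [:- 1, 1:]" q p v]
    by (simp add: V.linear_add[OF linear_rf] rf_op_poly_L fract_shift_Fract pcompose_eq_0_iff)
qed

lemma re_fsc: "re (fsc r v) = fsc (fract_shift 1 r) (re v)"
proof (cases r)
  case (Fract p q)
  then show ?thesis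
    using fsc_Fract_semilinear[of re "\<lambda>p. pcompose p [:1, 1:]" q p v]
    by (simp add: V.linear_add[OF linear_re] re_op_poly_L fract_shift_Fract pcompose_eq_0_iff)
qed

lemma linear_Cas_ratfun: "Vector_Spaces.linear fsc fsc Cas"
  by (simp add: Vector_Spaces.linear_iff F.vector_space_axioms V.linear_add[OF linear_Cas] Cas_fsc)

lemma rf_op_poly_Cas:
  "rf (op_poly fsc P Cas v) = op_poly fsc (map_poly (fract_shift (- 1)) P) Cas (rf v)"
  by (rule F.op_poly_commute_semilinear[OF linear_Cas_ratfun linear_Cas_ratfun])
    (simp_all add: V.linear_add[OF linear_rf] rf_fsc Cas_rf)

lemma re_op_poly_Cas:
  "re (op_poly fsc P Cas v) = op_poly fsc (map_poly (fract_shift 1) P) Cas (re v)"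
  by (rule F.op_poly_commute_semilinear[OF linear_Cas_ratfun linear_Cas_ratfun])
    (simp_all add: V.linear_add[OF linear_re] re_fsc Cas_re)

lemma fsc_quadratic: "fsc (Fract [:0, c, 1:] 1) v = L (L v) + sc c (L v)"
  by (simp add: fsc_poly V.op_poly_pCons[OF linear_L] V.op_poly_const[OF linear_L]
      V.linear_add[OF linear_L] V.linear_scale[OF linear_L] V.linear_0[OF linear_L])

lemma rf_re_eq: "rf (re v) = op_poly fsc [:- Fract [:0, - 1, 1:] 1, 1:] Cas v"
proof -
  have "op_poly fsc [:- Fract [:0, - 1, 1:] 1, 1:] Cas v = - fsc (Fract [:0, - 1, 1:] 1) v + Cas v"
    by (simp only: F.op_poly_linear_poly[OF linear_Cas_ratfun] F.scale_minus_left F.scale_one)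
  then show ?thesis
    by (simp add: fsc_quadratic casimir_eq)
qed

lemma re_rf_eq: "re (rf v) = op_poly fsc [:- Fract [:0, 1, 1:] 1, 1:] Cas v"
proof -
  have "op_poly fsc [:- Fract [:0, 1, 1:] 1, 1:] Cas v = - fsc (Fract [:0, 1, 1:] 1) v + Cas v"
    by (simp only: F.op_poly_linear_poly[OF linear_Cas_ratfun] F.scale_minus_left F.scale_one)
  then show ?thesis
    by (simp add: fsc_quadratic casimir_eq re_rf)
qed

lemma is_min_poly_Cas_dvd_shift_rf_re:
  assumes M: "is_min_poly fsc Cas M"
  shows "M dvd map_poly (fract_shift (- 1)) M * [:- Fract [:0, - 1, 1:] 1, 1:]"
proof (rule F.is_min_poly_dvd[OF M linear_Cas_ratfun])
  fix v
  have "op_poly fsc (map_poly (fract_shift (- 1)) M * [:- Fract [:0, - 1, 1:] 1, 1:]) Cas v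
      = op_poly fsc (map_poly (fract_shift (- 1)) M) Cas (rf (re v))"
    by (simp only: F.op_poly_mult[OF linear_Cas_ratfun] rf_re_eq)
  also have "\<dots> = rf (op_poly fsc M Cas (re v))"
    by (simp only: rf_op_poly_Cas)
  also have "\<dots> = 0"
    using M by (simp add: is_min_poly_def V.linear_0[OF linear_rf])
  finally show
    "op_poly fsc (map_poly (fract_shift (- 1)) M * [:- Fract [:0, - 1, 1:] 1, 1:]) Cas v = 0" .
qed

lemma is_min_poly_Cas_dvd_shift_re_rf:
  assumes M: "is_min_poly fsc Cas M"
  shows "M dvd map_poly (fract_shift 1) M * [:- Fract [:0, 1, 1:] 1, 1:]"
proof (rule F.is_min_poly_dvd[OF M linear_Cas_ratfun])
  fix v
  have "op_poly fsc (map_poly (fract_shift 1) M * [:- Fract [:0, 1, 1:] 1, 1:]) Cas v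
      = op_poly fsc (map_poly (fract_shift 1) M) Cas (re (rf v))"
    by (simp only: F.op_poly_mult[OF linear_Cas_ratfun] re_rf_eq)
  also have "\<dots> = re (op_poly fsc M Cas (rf v))"
    by (simp only: re_op_poly_Cas)
  also have "\<dots> = 0"
    using M by (simp add: is_min_poly_def V.linear_0[OF linear_re])
  finally show
    "op_poly fsc (map_poly (fract_shift 1) M * [:- Fract [:0, 1, 1:] 1, 1:]) Cas v = 0" .
qed

lemma is_min_poly_Cas_shift_invariant:
  assumes M: "is_min_poly fsc Cas M"
  shows "map_poly (fract_shift (- 1)) M = M"
proof -
  define a :: ratfun where "a = Fract [:0, - 1, 1:] 1"
  define b :: ratfun where "b = Fract [:0, 1, 1:] 1"
  have lead_M: "lead_coeff M = 1"
    using M by (simp add: is_min_poly_def)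
  have "map_poly (fract_shift (- 1)) M dvd
      map_poly (fract_shift (- 1)) (map_poly (fract_shift 1) M * [:- b, 1:])"
    using is_min_poly_Cas_dvd_shift_re_rf[OF M, folded b_def]
    by (rule map_poly_dvd_hom[rotated 3]) (simp_all add: fract_shift_add fract_shift_mult)
  also have "map_poly (fract_shift (- 1)) (map_poly (fract_shift 1) M * [:- b, 1:])
      = map_poly (fract_shift (- 1)) (map_poly (fract_shift 1) M) *
        map_poly (fract_shift (- 1)) [:- b, 1:]"
    by (rule map_poly_mult_hom) (simp_all add: fract_shift_add fract_shift_mult)
  also have "map_poly (fract_shift (- 1)) (map_poly (fract_shift 1) M) = M"
    by (simp add: map_poly_map_poly o_def)
  also have "map_poly (fract_shift (- 1)) [:- b, 1:] = [:- a, 1:]"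
    by (simp add: a_def b_def map_poly_pCons fract_shift_Fract pcompose_pCons pcompose_1)
  finally have "map_poly (fract_shift (- 1)) M dvd M * [:- a, 1:]" .
  moreover have "lead_coeff (map_poly (fract_shift (- 1)) M) = 1"
    using lead_M by (simp add: lead_coeff_map_poly_nz)
  moreover have "degree (map_poly (fract_shift (- 1)) M) = degree M"
    by (rule degree_map_poly) simp
  ultimately show ?thesis
    using is_min_poly_Cas_dvd_shift_rf_re[OF M, folded a_def]
    by (blast intro: monic_eq_if_dvd_mult_linear[OF lead_M])
qed

lemma fsc_const: "fsc (Fract [:c:] 1) v = sc c v"
  by (simp add: fsc_poly V.op_poly_const[OF linear_L])

lemma op_poly_fsc_const_coeffs:
  "op_poly fsc (map_poly (\<lambda>c. Fract [:c:] 1) q) Cas v = op_poly sc q Cas v"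
proof -
  have "degree (map_poly (\<lambda>c. Fract [:c:] 1) q) = degree q"
    by (rule degree_map_poly) (simp add: Zero_fract_def eq_fract)
  then show ?thesis
    by (simp add: op_poly_def coeff_map_poly fract_collapse fsc_const)
qed

lemma ex_is_min_poly_Cas_const_coeffs:
  "\<exists>m. is_min_poly fsc Cas (map_poly (\<lambda>c. Fract [:c:] 1) m)"
proof -
  obtain B where "finite B" "F.span B = UNIV"
    using rational by (auto simp: rational_ext_def)
  then obtain M where M: "is_min_poly fsc Cas M"
    using F.ex_is_min_poly linear_Cas_ratfun by blast
  have "coeff M i \<in> range (\<lambda>c. Fract [:c:] 1)" for i
  proof -
    have "fract_shift (- 1) (coeff M i) = coeff M i"
      using arg_cong[OF is_min_poly_Cas_shift_invariant[OF M], of "\<lambda>p. coeff p i"]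
      by (simp add: coeff_map_poly)
    then obtain c where "coeff M i = Fract [:c:] 1"
      using fract_shift_invariant_imp_const[of "- 1" "coeff M i"] by auto
    then show ?thesis
      using rangeI[of "\<lambda>c. Fract [:c:] 1" c] by simp
  qed
  then obtain m where "M = map_poly (\<lambda>c. Fract [:c:] 1) m"
    using ex_map_poly_eq[OF inj_Fract_const Fract_const_0] by blast
  with M show ?thesis
    by blast
qed

end

theorem theorem6p1:
  fixes sc :: "complex \<Rightarrow> 'v::ab_group_add \<Rightarrow> 'v"
    and re rf rh :: "'v \<Rightarrow> 'v"
    and fsc :: "ratfun \<Rightarrow> 'v \<Rightarrow> 'v"
  assumes "sl2_module sc re rf rh"
    and "rational_ext sc re rf rh fsc"
  shows "\<exists>m :: complex poly.
           Vector_Spaces.linear fsc fsc (casimir sc re rf rh) \<and>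
           is_min_poly fsc (casimir sc re rf rh) (map_poly (\<lambda>c. Fract [:c:] 1) m) \<and>
           is_min_poly sc (casimir sc re rf rh) m"
proof -
  interpret rational_sl2_module sc re rf rh fsc
    using assms by (rule rational_sl2_module.intro)
  obtain m where m: "is_min_poly fsc Cas (map_poly (\<lambda>c. Fract [:c:] 1) m)"
    using ex_is_min_poly_Cas_const_coeffs by blast
  have "is_min_poly sc Cas m"
    by (rule is_min_poly_map_poly_descend[OF inj_Fract_const Fract_const_0 Fract_const_1
          op_poly_fsc_const_coeffs m])
  with m linear_Cas_ratfun show ?thesis
    by blast
qed

end
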